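(* In the setting described in the context, the convex program $$\min_{q\in\mathbb R^{\mathcal V}}\ \sum_{v\in\mathcal V}-p_v\log q_v\quad\text{s.t.}\quad q\ge\mathbf 0,\ Mq\le\mathbf 1$$ has a minimizer $q^*$, and there is a soft classifier $h^*$ with $q^{h^*}_v\ge q^*_v$ for all $v\in\mathcal V$ such that $$\mathbb E_{(x,y)\sim P}\big[\tilde\ell(h^*,(x,y))\big]=\sum_{v\in\mathcal V}-p_v\log q^*_v\le \mathbb E_{(x,y)\sim P}\big[\tilde\ell(h,(x,y))\big]$$ for every soft classifier $h$.
   Context: Let $\mathcal X$ be a set and $\mathcal Y=\{-1,1\}$. Let $P$ be a probability distribution on $\mathcal X\times\mathcal Y$ with finite support $\mathcal V$, and write $p_v=P(\{v\})>0$ for $v\in\mathcal V$. Let $N$ assign to each $x\in\mathcal X$ a nonempty set $N(x)\subseteq\mathcal X$; for $v=(x,y)$ write $N(v)=N(x)$. A soft classifier is any function $h:\mathcal X\to[0,1]^{\mathcal Y}$ with $h(x)_1+h(x)_{-1}=1$ for all $x$. The conflict graph is the bipartite graph with vertex set $\mathcal V$, parts $\mathcal V_c=\mathcal V\cap(\mathcal X\times\{c\})$ for $c\in\{1,-1\}$, and edge set $\mathcal E$ consisting of the pairs $(u,v)\in\mathcal V_1\times\mathcal V_{-1}$ with $N(u)\cap N(v)\neq\emptyset$. Let $E\in\mathbb R^{\mathcal E\times\mathcal V}$ be its edge incidence matrix ($E_{e,w}=1$ if $w$ is an endpoint of $e$, else $0$), and $M=\begin{pmatrix}E\\ I\end{pmatrix}\in\mathbb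 R^{(\mathcal E\sqcup\mathcal V)\times\mathcal V}$. For a soft classifier $h$ and $v=(x,y)\in\mathcal V$, $q^h_v=\inf_{\tilde x\in N(x)}h(\tilde x)_y$. The robust cross-entropy loss of $h$ at $(x,y)$ is $\tilde\ell(h,(x,y))=\sup_{\tilde x\in N(x)}\big(-\log h(\tilde x)_y\big)$, with $-\log 0=+\infty$; $\log$ of $0$ in the objective is $-\infty$. *)

theory Defs
  imports "HOL-Probability.Probability"
begin

text \<open>Labels are the integers -1 and 1. A data point is a pair (x,y).
  A soft classifier is h :: 'x => int => real; only the coordinates
  y = 1 and y = -1 are meaningful.\<close>

definition soft_classifier :: "('x \<Rightarrow> int \<Rightarrow> real) \<Rightarrow> bool" where
  "soft_classifier h \<longleftrightarrow>
     (\<forall>x. h x 1 \<in> {0..1} \<and> h x (-1) \<in> {0..1} \<and> h x 1 + h x (-1) = 1)"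

definition neglog :: "real \<Rightarrow> ereal" where
  "neglog t = (if t \<le> 0 then \<infinity> else ereal (- ln t))"

definition rloss :: "('x \<Rightarrow> 'x set) \<Rightarrow> ('x \<Rightarrow> int \<Rightarrow> real) \<Rightarrow> 'x \<times> int \<Rightarrow> ereal" where
  "rloss N h v = (SUP x'\<in>N (fst v). neglog (h x' (snd v)))"

definition expected_rloss ::
  "('x \<times> int) pmf \<Rightarrow> ('x \<Rightarrow> 'x set) \<Rightarrow> ('x \<Rightarrow> int \<Rightarrow> real) \<Rightarrow> ereal" where
  "expected_rloss P N h = (\<Sum>v\<in>set_pmf P. ereal (pmf P v) * rloss N h v)"

definition qh :: "('x \<Rightarrow> 'x set) \<Rightarrow> ('x \<Rightarrow> int \<Rightarrow> real) \<Rightarrow> 'x \<times> int \<Rightarrow> real" where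
  "qh N h v = (INF x'\<in>N (fst v). h x' (snd v))"

definition conflict_edges ::
  "('x \<times> int) set \<Rightarrow> ('x \<Rightarrow> 'x set) \<Rightarrow> (('x \<times> int) \<times> ('x \<times> int)) set" where
  "conflict_edges V N = {(u, v). u \<in> V \<and> v \<in> V \<and> snd u = 1 \<and> snd v = -1 \<and>
                                  N (fst u) \<inter> N (fst v) \<noteq> {}}"

definition incidence :: "(('x \<times> int) \<times> ('x \<times> int)) \<Rightarrow> ('x \<times> int) \<Rightarrow> real" where
  "incidence e w = (if w = fst e \<or> w = snd e then 1 else 0)"

text \<open>M = (E; I), rows indexed by the disjoint union of edges (Inl) and vertices (Inr).\<close>
definition Mmat :: "(('x \<times> int) \<times> ('x \<times> int)) + ('x \<times> int) \<Rightarrow> ('x \<times> int) \<Rightarrow> real" where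
  "Mmat r w = (case r of Inl e \<Rightarrow> incidence e w | Inr u \<Rightarrow> (if u = w then 1 else 0))"

definition M_rows :: "('x \<times> int) set \<Rightarrow> ('x \<Rightarrow> 'x set) \<Rightarrow>
    ((('x \<times> int) \<times> ('x \<times> int)) + ('x \<times> int)) set" where
  "M_rows V N = Inl ` conflict_edges V N \<union> Inr ` V"

text \<open>Feasible set of the convex program: q >= 0 and M q <= 1 (q in R^V, values
  outside V are irrelevant).\<close>
definition feasible :: "('x \<times> int) set \<Rightarrow> ('x \<Rightarrow> 'x set) \<Rightarrow> ('x \<times> int \<Rightarrow> real) \<Rightarrow> bool" where
  "feasible V N q \<longleftrightarrow> (\<forall>v\<in>V. 0 \<le> q v) \<and>
     (\<forall>r\<in>M_rows V N. (\<Sum>w\<in>V. Mmat r w * q w) \<le> 1)"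

definition objective :: "('x \<times> int) pmf \<Rightarrow> ('x \<times> int \<Rightarrow> real) \<Rightarrow> ereal" where
  "objective P q = (\<Sum>v\<in>set_pmf P. ereal (pmf P v) * neglog (q v))"

end

theory Submission
  imports Defs
begin

text \<open>The robust loss of a soft classifier h at v is -log q^h_v: -log is antitone and
  continuous as an extended-real function, so it turns the infimum defining q^h_v into the
  supremum defining the loss. The vector q^h is feasible, since a point x in N(u) \<inter> N(v) gives
  q^h_u + q^h_v \<le> h(x)_1 + h(x)_{-1} = 1; hence every expected loss is a value of the objective
  on the feasible set. Conversely, a feasible q is dominated by q^h for the classifier whose
  h(x)_1 is the largest q_u over u \<in> V_1 with x \<in> N(u) (or 0): for v \<in> V_{-1} the edge
  constraints give h(x)_{-1} \<ge> q_v. As the objective is antitone, its minimum is therefore the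
  expected loss of a classifier. The minimum is attained because the objective is continuous
  with values in (-\<infinity>, \<infinity>] and, after zeroing coordinates outside the support, the feasible
  set is compact.\<close>

lemma neglog_antimono: "antimono neglog"
  by (auto simp: neglog_def intro!: antimonoI)

lemma isCont_neglog: "isCont neglog t"
proof -
  have neg: "continuous_on {..<0} neglog"
    by (rule continuous_on_cong[THEN iffD1, OF refl _ continuous_on_const[of _ \<infinity>]])
      (simp add: neglog_def)
  have pos: "continuous_on {0<..} neglog"
    by (rule continuous_on_cong[THEN iffD1, OF refl _ continuous_on_ereal[of _ "\<lambda>s. - ln s"]])
      (auto simp: neglog_def intro!: continuous_intros)
  have zero: "(neglog \<longlongrightarrow> neglog 0) (at 0)"
  proof (rule filterlim_split_at)
    show "(neglog \<longlongrightarrow> neglog 0) (at_left 0)"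
      by (rule tendsto_eventually) (simp add: eventually_at_filter neglog_def)
    have "LIM s at_right (0::real). - ln s :> at_top"
      using filterlim_uminus_at_bot[THEN iffD1, OF ln_at_0] .
    then have "((\<lambda>s. ereal (- ln s)) \<longlongrightarrow> neglog 0) (at_right 0)"
      by (simp add: tendsto_PInfty_eq_at_top neglog_def)
    moreover have "eventually (\<lambda>s. ereal (- ln s) = neglog s) (at_right 0)"
      by (simp add: eventually_at_filter neglog_def)
    ultimately show "(neglog \<longlongrightarrow> neglog 0) (at_right 0)"
      by (rule Lim_transform_eventually)
  qed
  consider "t < 0" | "t = 0" | "0 < t" by linarith
  then show ?thesis
  proof cases
    case 1
    then show ?thesis using neg by (simp add: continuous_on_eq_continuous_at)
  next
    case 2
    then show ?thesis using zero by (simp add: isCont_def)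
  next
    case 3
    then show ?thesis using pos by (simp add: continuous_on_eq_continuous_at)
  qed
qed

lemma continuous_on_sum_ereal:
  fixes f :: "'i \<Rightarrow> 'a::topological_space \<Rightarrow> ereal"
  assumes "\<And>i. i \<in> I \<Longrightarrow> continuous_on S (f i)"
    and "\<And>i x. i \<in> I \<Longrightarrow> x \<in> S \<Longrightarrow> f i x \<noteq> -\<infinity>"
  shows "continuous_on S (\<lambda>x. \<Sum>i\<in>I. f i x)"
proof (cases "finite I")
  case True
  from this assms
  have "continuous_on S (\<lambda>x. \<Sum>i\<in>I. f i x) \<and> (\<forall>x\<in>S. (\<Sum>i\<in>I. f i x) \<noteq> -\<infinity>)"
  proof (induction rule: finite_induct)
    case (insert j I)
    have "continuous_on S (\<lambda>x. f j x + (\<Sum>i\<in>I. f i x))"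
      using insert by (auto intro!: tendsto_add_ereal_nonneg simp: continuous_on_def)
    moreover have "f j x + (\<Sum>i\<in>I. f i x) \<noteq> -\<infinity>" if "x \<in> S" for x
      using insert that by simp
    ultimately show ?case using insert by simp
  qed simp
  then show ?thesis ..
qed simp

lemma continuous_on_objective: "continuous_on UNIV (objective (P :: ('x \<times> int) pmf))"
  unfolding objective_def[abs_def]
proof (rule continuous_on_sum_ereal)
  fix v :: "'x \<times> int"
  have "continuous_on UNIV (\<lambda>q. neglog (q v))"
    by (rule continuous_on_compose2[OF continuous_at_imp_continuous_on _ subset_UNIV])
      (simp_all add: isCont_neglog)
  then show "continuous_on UNIV (\<lambda>q. ereal (pmf P v) * neglog (q v))"
    by (simp add: continuous_on_cmult_ereal)
  fix q :: "'x \<times> int \<Rightarrow> real"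
  show "ereal (pmf P v) * neglog (q v) \<noteq> -\<infinity>"
    by (simp add: neglog_def)
qed

lemma feasible_cong:
  "(\<And>v. v \<in> V \<Longrightarrow> q v = q' v) \<Longrightarrow> feasible V N q \<longleftrightarrow> feasible V N q'"
  unfolding feasible_def by (simp cong: sum.cong)

lemma objective_cong:
  "(\<And>v. v \<in> set_pmf P \<Longrightarrow> q v = q' v) \<Longrightarrow> objective P q = objective P q'"
  unfolding objective_def by (simp cong: sum.cong)

lemma objective_antimono:
  "(\<And>v. v \<in> set_pmf P \<Longrightarrow> q v \<le> q' v) \<Longrightarrow> objective P q' \<le> objective P q"
  unfolding objective_def
  by (intro sum_mono ereal_mult_left_mono) (auto intro: antimonoD[OF neglog_antimono])

lemma closed_feasible: "closed {q. feasible V N q}"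
  unfolding feasible_def Ball_def
  by (intro closed_Collect_conj closed_Collect_all closed_Collect_imp closed_Collect_le
      open_Collect_const continuous_intros continuous_on_product_coordinates)

lemma feasible_iff:
  assumes fin: "finite V"
  shows "feasible V N q \<longleftrightarrow> (\<forall>v\<in>V. 0 \<le> q v \<and> q v \<le> 1) \<and>
     (\<forall>(u, w) \<in> conflict_edges V N. q u + q w \<le> 1)"
proof -
  have vertex_row: "(\<Sum>w\<in>V. Mmat (Inr u) w * q w) = q u" if "u \<in> V" for u
  proof -
    have "(\<Sum>w\<in>V. Mmat (Inr u) w * q w) = (\<Sum>w\<in>V. if u = w then q w else 0)"
      by (rule sum.cong) (auto simp: Mmat_def)
    also have "\<dots> = q u" using fin that by simp
    finally show ?thesis .
  qed
  have edge_row: "(\<Sum>w\<in>V. Mmat (Inl (u, v)) w * q w) = q u + q v"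
    if "(u, v) \<in> conflict_edges V N" for u v
  proof -
    from that have uv: "u \<in> V" "v \<in> V" "u \<noteq> v" by (auto simp: conflict_edges_def)
    have "(\<Sum>w\<in>V. Mmat (Inl (u, v)) w * q w) =
          (\<Sum>w\<in>V. (if u = w then q w else 0) + (if v = w then q w else 0))"
      by (rule sum.cong) (use uv in \<open>auto simp: Mmat_def incidence_def\<close>)
    also have "\<dots> = q u + q v" using fin uv by (simp add: sum.distrib)
    finally show ?thesis .
  qed
  show ?thesis
    unfolding feasible_def M_rows_def ball_Un using vertex_row edge_row by auto
qed

lemma objective_attains_min:
  assumes fin: "finite (set_pmf P)"
  shows "\<exists>qs. feasible (set_pmf P) N qs \<and>
           (\<forall>q. feasible (set_pmf P) N q \<longrightarrow> objective P qs \<le> objective P q)"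
proof -
  define V where "V = set_pmf P"
  define S where "S v = (if v \<in> V then {0..1} else {0::real})" for v
  define K where "K = Pi\<^sub>E UNIV S \<inter> {q. feasible V N q}"
  have "(\<lambda>_. 0) \<in> K"
    by (simp add: K_def S_def feasible_def PiE_iff)
  then have K_nonempty: "K \<noteq> {}"
    by blast
  have "compactin (product_topology (\<lambda>_. euclidean) UNIV) (Pi\<^sub>E UNIV S)"
    unfolding compactin_PiE by (auto simp: S_def)
  then have K_compact: "compact K"
    unfolding K_def using closed_feasible
    by (intro compact_Int_closed) (simp_all add: euclidean_product_topology)
  have "continuous_on K (objective P)"
    using continuous_on_objective by (rule continuous_on_subset) simp
  then obtain qs where qs: "qs \<in> K" and min: "\<forall>q\<in>K. objective P qs \<le> objective P q"
    using continuous_attains_inf[OF K_compact K_nonempty] by blast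
  have "objective P qs \<le> objective P q" if "feasible V N q" for q
  proof -
    define q' where "q' w = (if w \<in> V then q w else 0)" for w
    have "\<forall>v\<in>V. 0 \<le> q v \<and> q v \<le> 1"
      using that fin by (simp add: V_def feasible_iff)
    then have "q' \<in> Pi\<^sub>E UNIV S"
      by (simp add: PiE_iff S_def q'_def)
    moreover have "feasible V N q'"
      using feasible_cong[of V q q' N] that by (simp add: q'_def)
    ultimately have "q' \<in> K"
      by (simp add: K_def)
    then have "objective P qs \<le> objective P q'" using min by blast
    also have "\<dots> = objective P q"
      by (rule objective_cong) (simp add: q'_def V_def)
    finally show ?thesis .
  qed
  with qs show ?thesis unfolding K_def V_def by blast
qed

lemma soft_classifier_range:
  "soft_classifier h \<Longrightarrow> y \<in> {-1, 1} \<Longrightarrow> h x y \<in> {0..1}"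
  by (auto simp: soft_classifier_def)

lemma bdd_below_soft_classifier:
  "soft_classifier h \<Longrightarrow> y \<in> {-1, 1} \<Longrightarrow> bdd_below ((\<lambda>x. h x y) ` X)"
  using soft_classifier_range[of h y] by (auto intro!: bdd_belowI2[of _ 0])

lemma qh_le:
  assumes "soft_classifier h" "snd v \<in> {-1, 1}" "x \<in> N (fst v)"
  shows "qh N h v \<le> h x (snd v)"
  unfolding qh_def using assms by (intro cINF_lower bdd_below_soft_classifier)

lemma qh_nonneg:
  assumes "soft_classifier h" "snd v \<in> {-1, 1}" "N (fst v) \<noteq> {}"
  shows "0 \<le> qh N h v"
  unfolding qh_def using assms by (intro cINF_greatest) (auto dest: soft_classifier_range)

lemma rloss_eq_neglog_qh:
  assumes "soft_classifier h" "snd v \<in> {-1, 1}" "N (fst v) \<noteq> {}"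
  shows "rloss N h v = neglog (qh N h v)"
proof -
  let ?S = "(\<lambda>x. h x (snd v)) ` N (fst v)"
  have "neglog (Inf ?S) = (SUP s\<in>?S. neglog s)"
    using assms(3) bdd_below_soft_classifier[OF assms(1,2)] isCont_neglog
    by (intro continuous_at_Inf_antimono neglog_antimono)
      (auto intro: continuous_at_imp_continuous_within)
  then show ?thesis
    by (simp add: rloss_def qh_def image_comp)
qed

lemma feasible_qh:
  assumes "finite V" "V \<subseteq> UNIV \<times> {-1, 1}" "\<And>x. N x \<noteq> {}" "soft_classifier h"
  shows "feasible V N (qh N h)"
  unfolding feasible_iff[OF assms(1)]
proof (intro conjI ballI)
  fix v assume "v \<in> V"
  then have y: "snd v \<in> {-1, 1}" using assms(2) by auto
  then show "0 \<le> qh N h v"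
    using qh_nonneg[of h v N, OF assms(4) _ assms(3)] by blast
  obtain x where x: "x \<in> N (fst v)" using assms(3) by blast
  then show "qh N h v \<le> 1"
    using qh_le[of h v x N, OF assms(4) y x] soft_classifier_range[OF assms(4) y, of x] by auto
next
  fix e assume "e \<in> conflict_edges V N"
  then obtain u w x where e: "e = (u, w)" "snd u = 1" "snd w = -1"
    and x: "x \<in> N (fst u)" "x \<in> N (fst w)"
    unfolding conflict_edges_def by blast
  have "qh N h u + qh N h w \<le> h x 1 + h x (-1)"
    using qh_le[of h u x N, OF assms(4) _ x(1)] qh_le[of h w x N, OF assms(4) _ x(2)] e
    by (intro add_mono) auto
  also have "\<dots> = 1"
    using assms(4) by (simp add: soft_classifier_def)
  finally show "case e of (u, w) \<Rightarrow> qh N h u + qh N h w \<le> 1"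
    using e by simp
qed

lemma expected_rloss_eq_objective_qh:
  assumes "set_pmf P \<subseteq> UNIV \<times> {-1, 1}" "\<And>x. N x \<noteq> {}" "soft_classifier h"
  shows "expected_rloss P N h = objective P (qh N h)"
  unfolding expected_rloss_def objective_def
  using assms by (intro sum.cong refl) (auto simp: rloss_eq_neglog_qh)

lemma feasible_dominated_by_soft_classifier:
  assumes fin: "finite V" and labels: "V \<subseteq> UNIV \<times> {-1, 1}" and N: "\<And>x. N x \<noteq> {}"
    and q: "feasible V N q"
  shows "\<exists>h. soft_classifier h \<and> (\<forall>v\<in>V. q v \<le> qh N h v)"
proof -
  have q_range: "\<And>v. v \<in> V \<Longrightarrow> 0 \<le> q v \<and> q v \<le> 1"
    and q_edge: "\<And>u w. (u, w) \<in> conflict_edges V N \<Longrightarrow> q u + q w \<le> 1"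
    using q by (auto simp: feasible_iff[OF fin])
  define A where "A x = insert 0 (q ` {u \<in> V. snd u = 1 \<and> x \<in> N (fst u)})" for x
  define h where "h x y = (if y = 1 then Max (A x) else 1 - Max (A x))" for x and y :: int
  have A_fin: "finite (A x)" for x
    using fin by (simp add: A_def)
  have Max_A: "0 \<le> Max (A x) \<and> Max (A x) \<le> 1" for x
    using A_fin[of x] q_range by (auto simp: A_def Max_ge_iff)
  have "soft_classifier h"
    using Max_A by (simp add: soft_classifier_def h_def)
  moreover have "q v \<le> h x (snd v)" if v: "v \<in> V" and x: "x \<in> N (fst v)" for v x
  proof -
    consider "snd v = 1" | "snd v = -1" using v labels by auto
    then show ?thesis
    proof cases
      case 1
      then have "q v \<in> A x" using v x by (auto simp: A_def)
      then show ?thesis using 1 A_fin by (simp add: h_def)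
    next
      case 2
      have bound: "a \<le> 1 - q v" if "a \<in> A x" for a
      proof -
        consider "a = 0" | u where "u \<in> V" "snd u = 1" "x \<in> N (fst u)" "a = q u"
          using \<open>a \<in> A x\<close> by (auto simp: A_def)
        then show ?thesis
        proof cases
          case (2 u)
          then have "(u, v) \<in> conflict_edges V N"
            using v x \<open>snd v = -1\<close> by (auto simp: conflict_edges_def)
          then show ?thesis using q_edge 2 by fastforce
        qed (use q_range v in auto)
      qed
      have "Max (A x) \<le> 1 - q v"
        by (rule Max.boundedI[OF A_fin _ bound]) (simp add: A_def)
      then show ?thesis using 2 by (simp add: h_def)
    qed
  qed
  then have "\<forall>v\<in>V. q v \<le> qh N h v"
    using N by (auto simp: qh_def intro!: cINF_greatest)
  ultimately show ?thesis by blast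
qed

theorem theorem1:
  fixes P :: "('x \<times> int) pmf" and N :: "'x \<Rightarrow> 'x set"
  assumes "finite (set_pmf P)"
    and "set_pmf P \<subseteq> UNIV \<times> {-1, 1}"
    and "\<And>x. N x \<noteq> {}"
  shows "\<exists>qs. feasible (set_pmf P) N qs \<and>
           (\<forall>q. feasible (set_pmf P) N q \<longrightarrow> objective P qs \<le> objective P q) \<and>
           (\<exists>hs. soft_classifier hs \<and>
              (\<forall>v\<in>set_pmf P. qh N hs v \<ge> qs v) \<and>
              expected_rloss P N hs = objective P qs \<and>
              (\<forall>h. soft_classifier h \<longrightarrow> objective P qs \<le> expected_rloss P N h))"
proof -
  obtain qs where qs_feasible: "feasible (set_pmf P) N qs"
    and qs_min: "\<And>q. feasible (set_pmf P) N q \<Longrightarrow> objective P qs \<le> objective P q"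
    using objective_attains_min[OF assms(1)] by blast
  obtain hs where hs: "soft_classifier hs" and dominates: "\<forall>v\<in>set_pmf P. qs v \<le> qh N hs v"
    using feasible_dominated_by_soft_classifier[OF assms qs_feasible] by blast
  have lower: "objective P qs \<le> expected_rloss P N h" if "soft_classifier h" for h
    using qs_min[OF feasible_qh[OF assms that]] expected_rloss_eq_objective_qh[OF assms(2,3) that]
    by simp
  have "expected_rloss P N hs \<le> objective P qs"
    using expected_rloss_eq_objective_qh[OF assms(2,3) hs] objective_antimono[of P qs] dominates
    by simp
  with lower[OF hs] have "expected_rloss P N hs = objective P qs"
    by (rule antisym[rotated])
  with qs_feasible qs_min hs dominates lower show ?thesis
    by blast
qed

end
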